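(* Let $D\in QH^*(G,\mathbb Z)$ and write $D=a+ib$ as a function on $\mathrm{Spec}\,R$ with real-valued functions $a,b$. Then $\overline D=a-ib$ as functions on $\mathrm{Spec}\,R$ (i.e. the positive function $r$ with $\overline D=r(a-ib)$ can be taken identically equal to $1$).
   Context: Let $0<k<n$ be integers, $l=n-k$, and $G=G(k,n)$ the Grassmannian of $k$-planes in $\mathbb C^n$. Schubert classes $S_\lambda$ of $G$ are indexed by Young diagrams $\lambda=(\lambda_1\ge\dots\ge\lambda_l\ge0)$ with $\lambda_1\le k$. $QH^*(G,\mathbb Z)$ denotes the small quantum cohomology ring of $G$ with the quantum parameter $q$ set equal to $1$, a free $\mathbb Z$-module with basis the Schubert classes, product denoted $*$. The operator $X\mapsto\overline X$ is defined on Schubert classes and extended $\mathbb Z$-linearly: for $\lambda$ let $d_\lambda$ be the largest $i$ with $\lambda_i\ge i$ ($0$ if none); then $\overline{S_\lambda}=S_\mu$ with $\mu_i=d_\lambda+k-\lambda_{d_\lambda-i+1}$ for $i\le d_\lambda$ and $\mu_i=d_\lambda-\lambda_{l-i+d_\lambda+1}$ for $i>d_\lambda$. Let $R=QH^*(G,\mathbb C)=QH^*(G,\mathbb Z)\otimes\mathbb C$. It is known that $R$ is a semisimple commutative $\mathbb C$-algebra, so $\mathrm{Spec}\,R$ is a finite set of reduced points and $R$ is identified with the algebra of $\mathbb C$-valued functions on $\mathrm{Spec}\,R$; each class $X$ thus gives a function $p\mapsto X(p)\in\mathbb C$, with $(X*Y)(p)=X(p)Y(p)$. *)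

theory Defs
  imports Complex_Main "Jordan_Normal_Form.Determinant"
begin

text \<open>Young diagrams indexing Schubert classes of G(k,n), l = n - k:
  lists (lambda_1,...,lambda_l) (stored 0-indexed) weakly decreasing with entries at most k.\<close>
definition young_diagrams :: "nat \<Rightarrow> nat \<Rightarrow> nat list set" where
  "young_diagrams k n = {lam. length lam = n - k \<and> sorted_wrt (\<ge>) lam \<and> (\<forall>a\<in>set lam. a \<le> k)}"

definition part :: "nat list \<Rightarrow> nat \<Rightarrow> nat" where
  "part lam i = lam ! (i - 1)"

definition durfee :: "nat list \<Rightarrow> nat" where
  "durfee lam = Max ({i \<in> {1..length lam}. part lam i \<ge> i} \<union> {0})"

definition bar_diagram :: "nat \<Rightarrow> nat \<Rightarrow> nat list \<Rightarrow> nat list" where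
  "bar_diagram k n lam =
     (let l = n - k; d = durfee lam in
      map (\<lambda>i. if i \<le> d then d + k - part lam (d - i + 1) else d - part lam (l - i + d + 1)) [1..<l+1])"

text \<open>Elements of QH^*(G,Z): integer coefficient functions on Young diagrams,
  X = sum over lam in the box of X(lam) S_lam (values outside the box are ignored).
  The bar operator, extended Z-linearly.\<close>
definition qh_bar :: "nat \<Rightarrow> nat \<Rightarrow> (nat list \<Rightarrow> int) \<Rightarrow> (nat list \<Rightarrow> int)" where
  "qh_bar k n D = (\<lambda>mu. \<Sum>lam\<in>{lam \<in> young_diagrams k n. bar_diagram k n lam = mu}. D lam)"

text \<open>Complete homogeneous symmetric functions h_j expressed in the elementary ones e_i
  via sum_i (-1)^i e_i h_(j-i) = 0 (j > 0), h_0 = 1.\<close>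
primrec h_list :: "(nat \<Rightarrow> complex) \<Rightarrow> nat \<Rightarrow> complex list" where
  "h_list e 0 = [1]"
| "h_list e (Suc j) = h_list e j @
     [\<Sum>i=1..Suc j. (-1) ^ (i + 1) * e i * (h_list e j ! (Suc j - i))]"

definition h_fun :: "(nat \<Rightarrow> complex) \<Rightarrow> nat \<Rightarrow> complex" where
  "h_fun e j = h_list e j ! j"

text \<open>Spec R, via the Siebert--Tian presentation (q = 1)
  QH^*(G) = Z[e_1,...,e_k]/(h_(l+1),...,h_(n-1), h_n + (-1)^k):
  a point is the tuple of values (e_1,...,e_k) of the generators; we encode it as
  e :: nat => complex with e 0 = 1 and e i = 0 for i > k.\<close>
definition qh_spec :: "nat \<Rightarrow> nat \<Rightarrow> (nat \<Rightarrow> complex) set" where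
  "qh_spec k n = {e. e 0 = 1 \<and> (\<forall>i>k. e i = 0) \<and>
      (\<forall>j\<in>{n - k + 1..<n}. h_fun e j = 0) \<and> h_fun e n + (-1) ^ k = 0}"

definition e_int :: "(nat \<Rightarrow> complex) \<Rightarrow> int \<Rightarrow> complex" where
  "e_int e m = (if m < 0 then 0 else e (nat m))"

text \<open>Value of the Schubert class S_lam at the point e: Giambelli formula
  S_lam = det (e_(lambda_i + j - i))_(1 \<le> i,j \<le> l).\<close>
definition schubert_val :: "nat \<Rightarrow> nat \<Rightarrow> nat list \<Rightarrow> (nat \<Rightarrow> complex) \<Rightarrow> complex" where
  "schubert_val k n lam e =
     det (mat (n - k) (n - k) (\<lambda>(i, j). e_int e (int (lam ! i) + int j - int i)))"

definition qh_eval :: "nat \<Rightarrow> nat \<Rightarrow> (nat list \<Rightarrow> int) \<Rightarrow> (nat \<Rightarrow> complex) \<Rightarrow> complex" where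
  "qh_eval k n X e = (\<Sum>lam\<in>young_diagrams k n. of_int (X lam) * schubert_val k n lam e)"

end

theory Submission
  imports Defs "HOL-Computational_Algebra.Fundamental_Theorem_Algebra"
begin

(* At a point p of Spec R write E(x) = \<Sum> e_i x^i and Q(x) = \<Sum>_{s \<le> l} (-1)^s h_s x^s.
   The relations defining Spec R say exactly that E Q = 1 + (-1)^l x^n, so all roots of E lie
   on the unit circle; hence E is self-inversive, cnj e_i = e_(k-i) / e_k, and conjugating the
   Giambelli determinant of S_lambda gives a determinant in the e_(k-m) divided by e_k^l.
   On the other side, the coefficients u_m of E(x) (1 - (-1)^l x^n) agree with e_m below n,
   are e_(m-n) up to sign above, and satisfy the linear recurrence with characteristic
   polynomial Q. Moving a window of that recurrence l steps multiplies its determinant by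
   det(companion)^l = h_l^l = e_k^(-l), and a cyclic rotation of the rows turns the moved
   window into the Giambelli matrix of the barred diagram. *)

lemma length_h_list: "length (h_list e j) = Suc j"
  by (induct j) auto

lemma nth_h_list: "i \<le> j \<Longrightarrow> h_list e j ! i = h_fun e i"
proof (induct j arbitrary: i)
  case 0
  then show ?case by (simp add: h_fun_def)
next
  case (Suc j)
  show ?case
  proof (cases "i \<le> j")
    case True
    then show ?thesis
      using Suc by (simp add: nth_append length_h_list)
  next
    case False
    then have "i = Suc j"
      using Suc by simp
    then show ?thesis
      by (simp add: h_fun_def)
  qed
qed

lemma h_fun_0 [simp]: "h_fun e 0 = 1"
  by (simp add: h_fun_def)

lemma h_fun_Suc:
  "h_fun e (Suc j) = (\<Sum>i=1..Suc j. (-1) ^ (i + 1) * e i * h_fun e (Suc j - i))"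
  by (auto simp: h_fun_def[of e "Suc j"] nth_append length_h_list nth_h_list intro!: sum.cong)

lemma h_fun_recurrence:
  assumes "e 0 = 1" and "0 < N"
  shows "(\<Sum>i\<le>N. (-1) ^ i * e i * h_fun e (N - i)) = 0"
proof -
  obtain j where N: "N = Suc j"
    using assms(2) by (cases N) auto
  have "h_fun e N = - (\<Sum>i=1..N. (-1) ^ i * e i * h_fun e (N - i))"
    by (simp add: N h_fun_Suc sum_negf[symmetric])
  moreover have "(\<Sum>i\<le>N. (-1) ^ i * e i * h_fun e (N - i))
      = h_fun e N + (\<Sum>i=1..N. (-1) ^ i * e i * h_fun e (N - i))"
    using assms(1) by (simp add: sum.atMost_shift sum.atLeast1_atMost_eq del: sum.lessThan_Suc)
  ultimately show ?thesis
    by simp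
qed

lemma h_fun_convolution:
  assumes "e 0 = 1" and "0 < N"
  shows "(\<Sum>i\<le>N. e i * ((-1) ^ (N - i) * h_fun e (N - i))) = 0"
proof -
  have "(\<Sum>i\<le>N. e i * ((-1) ^ (N - i) * h_fun e (N - i)))
      = (-1) ^ N * (\<Sum>i\<le>N. (-1) ^ i * e i * h_fun e (N - i))"
    unfolding sum_distrib_left
    by (intro sum.cong) (auto simp: neg_one_power_add_eq_neg_one_power_diff[symmetric] power_add)
  then show ?thesis
    using h_fun_recurrence[of e N, OF assms] by simp
qed

lemma map_poly_cnj_mult: "map_poly cnj (p * q) = map_poly cnj p * map_poly cnj (q :: complex poly)"
  by (rule poly_eq_poly_eq_iff[THEN iffD1]) (auto simp: fun_eq_iff)

text \<open>For a linear factor \<open>x - y\<close> with \<open>|y| = 1\<close> one has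
  \<open>reflect (x - y) = -y \<cdot> cnj (x - y)\<close>; both sides are multiplicative.\<close>

lemma reflect_poly_eq_smult_map_poly_cnj:
  fixes p :: "complex poly"
  assumes "p \<noteq> 0" and "\<And>z. poly p z = 0 \<Longrightarrow> cmod z = 1"
  shows "\<exists>c. reflect_poly p = smult c (map_poly cnj p)"
  using assms
proof (induct "degree p" arbitrary: p)
  case 0
  then obtain a where p: "p = [:a:]" and "a \<noteq> 0"
    by (metis degree_eq_zeroE pCons_0_0)
  then have "reflect_poly p = smult (a / cnj a) (map_poly cnj p)"
    by (simp add: map_poly_pCons)
  then show ?case ..
next
  case (Suc m p)
  have "\<not> constant (poly p)"
    using Suc(2) by (simp add: constant_degree)
  then obtain y where "poly p y = 0"
    using fundamental_theorem_of_algebra by blast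
  then obtain r where p: "p = [:-y, 1:] * r"
    by (metis dvdE poly_eq_0_iff_dvd)
  with Suc.prems have "r \<noteq> 0" and "\<And>z. poly r z = 0 \<Longrightarrow> cmod z = 1"
    by auto
  moreover have "m = degree r"
    using Suc(2) degree_mult_eq[of "[:-y, 1:]" r] \<open>r \<noteq> 0\<close> p by simp
  ultimately obtain c where c: "reflect_poly r = smult c (map_poly cnj r)"
    using Suc(1) by blast
  have "cmod y = 1"
    using Suc.prems(2) \<open>poly p y = 0\<close> by blast
  then have "y * cnj y = 1"
    by (metis complex_norm_square mult.commute of_real_1 power_one)
  then have "reflect_poly [:-y, 1:] = smult (-y) (map_poly cnj [:-y, 1:])"
    by (simp add: reflect_poly_def map_poly_pCons)
  then have "reflect_poly p = smult (-y) (map_poly cnj [:-y, 1:]) * smult c (map_poly cnj r)"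
    by (simp only: p reflect_poly_mult c)
  also have "\<dots> = smult (c * -y) (map_poly cnj p)"
    by (simp only: p map_poly_cnj_mult mult_smult_left mult_smult_right smult_smult)
  finally show ?case ..
qed

definition coeff_int :: "'a::zero poly \<Rightarrow> int \<Rightarrow> 'a" where
  "coeff_int q m = (if m < 0 then 0 else coeff q (nat m))"

lemma coeff_mult_coeff_int:
  fixes q r :: "'a::comm_semiring_0 poly"
  assumes "degree q \<le> m"
  shows "coeff (q * r) N = (\<Sum>s\<le>m. coeff q s * coeff_int r (int N - int s))"
proof -
  have "(\<Sum>s\<le>m. coeff q s * coeff_int r (int N - int s))
      = (\<Sum>s\<le>m + N. coeff q s * coeff_int r (int N - int s))"
    using assms by (intro sum.mono_neutral_left) (auto simp: coeff_eq_0)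
  also have "\<dots> = (\<Sum>s\<le>N. coeff q s * coeff_int r (int N - int s))"
    by (intro sum.mono_neutral_right) (auto simp: coeff_int_def)
  also have "\<dots> = coeff (q * r) N"
    by (auto simp: coeff_mult coeff_int_def nat_diff_distrib intro!: sum.cong)
  finally show ?thesis ..
qed

lemma det_zero_row:
  assumes "A \<in> carrier_mat m m" and "r < m" and "\<And>j. j < m \<Longrightarrow> A $$ (r, j) = 0"
  shows "det A = 0"
proof -
  have "(\<Prod>i = 0..<m. A $$ (i, \<sigma> i)) = 0" if "\<sigma> permutes {0..<m}" for \<sigma>
    using assms(2) assms(3)[of "\<sigma> r"] permutes_in_image[OF that, of r]
    by (intro prod_zero bexI[of _ r]) auto
  then show ?thesis
    unfolding det_def'[OF assms(1)] by simp
qed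

lemma det_scale_rows:
  assumes A: "A \<in> carrier_mat m m"
  shows "det (mat m m (\<lambda>(i, j). c i * A $$ (i, j))) = prod c {0..<m} * det A"
proof -
  have "(\<Prod>i = 0..<m. mat m m (\<lambda>(i, j). c i * A $$ (i, j)) $$ (i, \<sigma> i))
      = prod c {0..<m} * (\<Prod>i = 0..<m. A $$ (i, \<sigma> i))" if "\<sigma> permutes {0..<m}" for \<sigma>
    using permutes_in_image[OF that] by (simp add: prod.distrib)
  then show ?thesis
    unfolding det_def'[OF A] det_def'[of "mat m m _" m, OF mat_carrier] sum_distrib_left
    by (auto simp: mult.left_commute intro!: sum.cong)
qed

lemma det_reverse_rows_cols:
  assumes A: "A \<in> carrier_mat m m"
  shows "det (mat m m (\<lambda>(i, j). A $$ (m - 1 - i, m - 1 - j))) = det A"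
proof -
  define \<rho> where "\<rho> i = (if i < m then m - 1 - i else i)" for i
  have \<rho>: "\<rho> permutes {0..<m}"
    by (rule bij_imp_permutes, rule bij_betw_byWitness[of _ \<rho>]) (auto simp: \<rho>_def)
  define B where "B = mat m m (\<lambda>(i, j). A $$ (\<rho> i, j))"
  have B: "B \<in> carrier_mat m m"
    by (simp add: B_def)
  have "mat m m (\<lambda>(i, j). A $$ (m - 1 - i, m - 1 - j))
      = transpose_mat (mat m m (\<lambda>(i, j). transpose_mat B $$ (\<rho> i, j)))"
    by (rule eq_matI) (auto simp: B_def \<rho>_def)
  then have "det (mat m m (\<lambda>(i, j). A $$ (m - 1 - i, m - 1 - j))) = signof \<rho> * det B"
    using det_permute_rows[OF transpose_carrier_mat[THEN iffD2, OF B] \<rho>]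
    by (simp add: det_transpose[OF B] det_transpose[of _ m])
  also have "\<dots> = signof \<rho> * signof \<rho> * det A"
    unfolding B_def det_permute_rows[OF A \<rho>] by simp
  finally show ?thesis
    by (simp add: sign_def)
qed

lemma neg_one_power_rotation_sign:
  assumes "d \<le> m"
  shows "(- ((-1) ^ m)) ^ (m - d) * (-1) ^ (d * (m - d)) = (1::'a::ring_1)"
proof -
  have "- ((-1) ^ m) = (-1::'a) ^ (m + 1)"
    by simp
  then have "(- ((-1) ^ m)) ^ (m - d) * (-1) ^ (d * (m - d))
      = (-1::'a) ^ ((m + 1) * (m - d) + d * (m - d))"
    by (simp only: power_mult power_add)
  also have "(m + 1) * (m - d) + d * (m - d) = (m + 1 + d) * (m - d)"
    by (simp only: add_mult_distrib)
  finally have "(- ((-1) ^ m)) ^ (m - d) * (-1) ^ (d * (m - d))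
      = (-1::'a) ^ ((m + 1 + d) * (m - d))" .
  moreover have "m + 1 + d = (m - d) + 1 + 2 * d"
    using assms by simp
  then have "even ((m + 1 + d) * (m - d))"
    by (cases "even (m - d)") auto
  ultimately show ?thesis
    by simp
qed

definition companion_mat :: "nat \<Rightarrow> (nat \<Rightarrow> 'a::comm_ring_1) \<Rightarrow> 'a mat" where
  "companion_mat m c =
     mat m m (\<lambda>(i, j). if j < m - 1 then (if i = j + 1 then 1 else 0) else - c (m - i))"

lemma companion_mat_carrier [simp]: "companion_mat m c \<in> carrier_mat m m"
  by (simp add: companion_mat_def)

lemma det_companion_mat:
  assumes "0 < m"
  shows "det (companion_mat m c) = (-1) ^ m * c m"
proof -
  obtain m' where m: "m = Suc m'"
    using assms by (cases m) auto
  let ?C = "companion_mat m c"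
  have minor: "det (mat_delete ?C i m') = 0" if "0 < i" "i < m" for i
    by (rule det_zero_row[of _ m' 0]) (use that m in \<open>auto simp: mat_delete_def companion_mat_def\<close>)
  have "det ?C = (\<Sum>i<m. ?C $$ (i, m') * cofactor ?C i m')"
    by (rule laplace_expansion_column[OF companion_mat_carrier]) (simp add: m)
  also have "\<dots> = ?C $$ (0, m') * cofactor ?C 0 m'"
    by (rule sum.remove[where x = 0, THEN trans]) (use minor m in \<open>auto simp: cofactor_def\<close>)
  also have "mat_delete ?C 0 m' = 1\<^sub>m m'"
    by (rule eq_matI) (auto simp: mat_delete_def companion_mat_def m)
  then have "cofactor ?C 0 m' = (-1) ^ m'"
    by (simp add: cofactor_def)
  finally show ?thesis
    by (simp add: companion_mat_def m)
qed

definition window_mat :: "nat \<Rightarrow> (int \<Rightarrow> 'a) \<Rightarrow> (nat \<Rightarrow> int) \<Rightarrow> 'a mat" where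
  "window_mat m u a = mat m m (\<lambda>(i, j). u (a i + int j))"

lemma window_mat_carrier [simp]: "window_mat m u a \<in> carrier_mat m m"
  by (simp add: window_mat_def)

lemma sum_atMost_reflect_shift:
  fixes f :: "nat \<Rightarrow> 'a::comm_monoid_add"
  shows "(\<Sum>s\<le>m. f s) = f 0 + (\<Sum>j<m. f (m - j))"
proof -
  have "(\<Sum>s\<le>m. f s) = (\<Sum>j\<le>m. f (m - j))"
    using sum.atLeastAtMost_rev[of f 0 m] by (simp add: atLeast0AtMost)
  then show ?thesis
    by (simp add: lessThan_Suc_atMost[symmetric] ac_simps del: lessThan_Suc)
qed

lemma window_mat_shift:
  fixes u :: "int \<Rightarrow> 'a::comm_ring_1"
  assumes "c 0 = 1"
    and rec: "\<And>i. i < m \<Longrightarrow> (\<Sum>s\<le>m. c s * u (a i + int m - int s)) = 0"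
  shows "window_mat m u (\<lambda>i. a i + 1) = window_mat m u a * companion_mat m c"
proof (rule eq_matI)
  fix i j
  assume "i < dim_row (window_mat m u a * companion_mat m c)"
    and "j < dim_col (window_mat m u a * companion_mat m c)"
  then have i: "i < m" and j: "j < m"
    by (auto simp: window_mat_def companion_mat_def)
  have "(window_mat m u a * companion_mat m c) $$ (i, j)
      = (\<Sum>j'<m. u (a i + int j') * companion_mat m c $$ (j', j))"
    using i j by (simp add: window_mat_def companion_mat_def scalar_prod_def atLeast0LessThan)
  also have "\<dots> = u (a i + 1 + int j)"
  proof (cases "j < m - 1")
    case True
    then have "(\<Sum>j'<m. u (a i + int j') * companion_mat m c $$ (j', j))
        = (\<Sum>j'<m. if j' = j + 1 then u (a i + int j') else 0)"
      by (intro sum.cong) (auto simp: companion_mat_def)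
    also have "\<dots> = u (a i + 1 + int j)"
      using True by (simp add: ac_simps)
    finally show ?thesis .
  next
    case False
    then have j: "j = m - 1"
      using j by simp
    have "(\<Sum>j'<m. u (a i + int j') * companion_mat m c $$ (j', j))
        = - (\<Sum>j'<m. c (m - j') * u (a i + int m - int (m - j')))"
      by (auto simp: companion_mat_def j sum_negf[symmetric] of_nat_diff intro!: sum.cong)
    also have "\<dots> = u (a i + int m)"
    proof -
      have "u (a i + int m) + (\<Sum>j'<m. c (m - j') * u (a i + int m - int (m - j'))) = 0"
        using rec[OF i] assms(1) by (simp add: sum_atMost_reflect_shift)
      then show ?thesis
        by (metis add.commute minus_unique)
    qed
    finally show ?thesis
      using j i by simp
  qed
  finally show "window_mat m u (\<lambda>i. a i + 1) $$ (i, j)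
      = (window_mat m u a * companion_mat m c) $$ (i, j)"
    using i j by (simp add: window_mat_def)
qed (auto simp: window_mat_def companion_mat_def)

lemma det_window_mat_shift:
  fixes u :: "int \<Rightarrow> 'a::comm_ring_1"
  assumes "0 < m" and "c 0 = 1"
    and rec: "\<And>i t. i < m \<Longrightarrow> t < T \<Longrightarrow> (\<Sum>s\<le>m. c s * u (a i + int t + int m - int s)) = 0"
  shows "det (window_mat m u (\<lambda>i. a i + int T)) = det (window_mat m u a) * ((-1) ^ m * c m) ^ T"
  using rec
proof (induct T)
  case (Suc T)
  have "(\<lambda>i. a i + int (Suc T)) = (\<lambda>i. (a i + int T) + 1)"
    by auto
  then have "window_mat m u (\<lambda>i. a i + int (Suc T))
      = window_mat m u (\<lambda>i. a i + int T) * companion_mat m c"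
    using window_mat_shift[of c m u "\<lambda>i. a i + int T"] assms(2) Suc.prems by simp
  then show ?case
    using Suc by (simp add: det_mult[of _ m] det_companion_mat[OF assms(1)])
qed simp

lemma finite_young_diagrams: "finite (young_diagrams k n)"
proof (rule finite_subset)
  show "young_diagrams k n \<subseteq> {xs. set xs \<subseteq> {0..k} \<and> length xs = n - k}"
    by (auto simp: young_diagrams_def)
qed (rule finite_lists_length_eq, simp)

lemma
  assumes "lam \<in> young_diagrams k n"
  shows young_diagram_length: "length lam = n - k"
    and young_diagram_sorted: "sorted_wrt (\<ge>) lam"
    and young_diagram_nth_le: "i < n - k \<Longrightarrow> lam ! i \<le> k"
  using assms by (auto simp: young_diagrams_def)

lemma sorted_wrt_ge_nth_mono:
  fixes xs :: "'a::order list"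
  shows "sorted_wrt (\<ge>) xs \<Longrightarrow> i \<le> j \<Longrightarrow> j < length xs \<Longrightarrow> xs ! j \<le> xs ! i"
  by (cases "i = j") (auto simp: sorted_wrt_iff_nth_less)

lemma durfee_cases:
  "durfee lam = 0 \<or> durfee lam \<in> {1..length lam} \<and> durfee lam \<le> lam ! (durfee lam - 1)"
proof -
  have "durfee lam \<in> {i \<in> {1..length lam}. part lam i \<ge> i} \<union> {0}"
    unfolding durfee_def by (rule Max_in) auto
  then show ?thesis
    by (auto simp: part_def)
qed

lemma durfee_ge: "i \<in> {1..length lam} \<Longrightarrow> i \<le> lam ! (i - 1) \<Longrightarrow> i \<le> durfee lam"
  unfolding durfee_def by (rule Max_ge) (auto simp: part_def)

lemma durfee_le_length: "durfee lam \<le> length lam"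
  using durfee_cases[of lam] by auto

lemma durfee_le_nth:
  assumes "sorted_wrt (\<ge>) lam" and "i < durfee lam"
  shows "durfee lam \<le> lam ! i"
proof -
  have "durfee lam \<le> lam ! (durfee lam - 1)" and "durfee lam \<le> length lam"
    using durfee_cases[of lam] assms(2) by auto
  moreover have "lam ! (durfee lam - 1) \<le> lam ! i"
    using sorted_wrt_ge_nth_mono[OF assms(1), of i "durfee lam - 1"] assms(2) calculation(2)
    by simp
  ultimately show ?thesis
    by linarith
qed

lemma nth_le_durfee:
  assumes "sorted_wrt (\<ge>) lam" and "durfee lam \<le> i" and "i < length lam"
  shows "lam ! i \<le> durfee lam"
proof (rule ccontr)
  assume "\<not> lam ! i \<le> durfee lam"
  then have "Suc (durfee lam) \<le> lam ! durfee lam"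
    using sorted_wrt_ge_nth_mono[OF assms(1), of "durfee lam" i] assms(2,3) by simp
  then have "Suc (durfee lam) \<le> durfee lam"
    using durfee_ge[of "Suc (durfee lam)" lam] assms(2,3) by simp
  then show False
    by simp
qed

lemma durfee_le_bound:
  assumes "\<forall>a\<in>set lam. a \<le> k"
  shows "durfee lam \<le> k"
  using durfee_cases[of lam] nth_mem[of "durfee lam - 1" lam] assms by fastforce

lemma length_bar_diagram: "length (bar_diagram k n lam) = n - k"
  by (simp add: bar_diagram_def Let_def del: upt_Suc)

lemma nth_bar_diagram:
  assumes "i < n - k"
  shows "bar_diagram k n lam ! i =
    (if i < durfee lam then durfee lam + k - lam ! (durfee lam - 1 - i)
     else durfee lam - lam ! (n - k - 1 - i + durfee lam))"
  using assms unfolding bar_diagram_def Let_def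
  by (auto simp: part_def nth_append simp del: upt_Suc intro!: arg_cong[where f = "(!) lam"])

lemma bar_diagram_nth_antimono:
  assumes lam: "lam \<in> young_diagrams k n" and "i < j" and "j < n - k"
  shows "bar_diagram k n lam ! j \<le> bar_diagram k n lam ! i"
proof -
  let ?d = "durfee lam" and ?mu = "bar_diagram k n lam"
  note sorted = young_diagram_sorted[OF lam]
  have len: "length lam = n - k"
    by (rule young_diagram_length[OF lam])
  have d_le: "?d \<le> n - k"
    using durfee_le_length[of lam] len by simp
  have "i < n - k"
    using assms by simp
  note mu = nth_bar_diagram[OF this, of lam] nth_bar_diagram[OF assms(3), of lam]
  consider "j < ?d" | "i < ?d" "?d \<le> j" | "?d \<le> i"
    using \<open>i < j\<close> by linarith
  then show ?thesis
  proof cases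
    case 1
    then show ?thesis
      using assms mu sorted_wrt_ge_nth_mono[OF sorted, of "?d - 1 - j" "?d - 1 - i"] d_le len
      by (simp add: diff_le_mono2)
  next
    case 2
    have "lam ! (?d - 1 - i) \<le> k"
      using young_diagram_nth_le[OF lam, of "?d - 1 - i"] 2 d_le by simp
    then have "?d \<le> ?mu ! i"
      using 2 mu by simp
    moreover have "?mu ! j \<le> ?d"
      using 2 mu by simp
    ultimately show ?thesis
      by simp
  next
    case 3
    then show ?thesis
      using assms mu d_le len
        sorted_wrt_ge_nth_mono[OF sorted, of "n - k - 1 - j + ?d" "n - k - 1 - i + ?d"]
      by (simp add: diff_le_mono2)
  qed
qed

lemma bar_diagram_in_young_diagrams:
  assumes lam: "lam \<in> young_diagrams k n"
  shows "bar_diagram k n lam \<in> young_diagrams k n"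
proof -
  let ?d = "durfee lam" and ?mu = "bar_diagram k n lam"
  have "?d \<le> k"
    using durfee_le_bound[of lam k] lam by (auto simp: young_diagrams_def)
  then have "?mu ! i \<le> k" if "i < n - k" for i
    using nth_bar_diagram[OF that, of lam] durfee_le_nth[OF young_diagram_sorted[OF lam], of "?d - 1 - i"]
    by auto
  then show ?thesis
    using bar_diagram_nth_antimono[OF lam] length_bar_diagram[of k n lam]
    by (auto simp: young_diagrams_def sorted_wrt_iff_nth_less in_set_conv_nth)
qed

(* Row offsets of the Giambelli matrix of lam after replacing each e_m by e_(k-m) and
   reversing the order of rows and columns. *)
definition flip_offset :: "nat \<Rightarrow> nat \<Rightarrow> nat list \<Rightarrow> nat \<Rightarrow> int" where
  "flip_offset k n lam i = int k - int (lam ! (n - k - 1 - i)) - int i"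

lemma flip_offset_bounds:
  assumes "lam \<in> young_diagrams k n" and "i < n - k"
  shows "1 - int (n - k) \<le> flip_offset k n lam i" and "flip_offset k n lam i \<le> int k"
proof -
  have "lam ! (n - k - 1 - i) \<le> k"
    by (rule young_diagram_nth_le[OF assms(1)]) (use assms(2) in linarith)
  then show "1 - int (n - k) \<le> flip_offset k n lam i" and "flip_offset k n lam i \<le> int k"
    using assms(2) by (auto simp: flip_offset_def of_nat_diff)
qed

locale qh_point =
  fixes k n :: nat and p :: "nat \<Rightarrow> complex"
  assumes k_pos: "0 < k" and k_less_n: "k < n" and p_in_spec: "p \<in> qh_spec k n"
begin

abbreviation "l \<equiv> n - k"

lemma p_0: "p 0 = 1"
  and p_eq_0: "k < i \<Longrightarrow> p i = 0"
  and h_fun_eq_0: "l < j \<Longrightarrow> j < n \<Longrightarrow> h_fun p j = 0"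
  and h_fun_n: "h_fun p n = - ((-1) ^ k)"
  using p_in_spec by (auto simp: qh_spec_def eq_neg_iff_add_eq_0)

definition elem_poly :: "complex poly" where
  "elem_poly = (\<Sum>i\<le>k. monom (p i) i)"

definition dual_poly :: "complex poly" where
  "dual_poly = (\<Sum>s\<le>l. monom ((-1) ^ s * h_fun p s) s)"

lemma coeff_elem_poly: "coeff elem_poly i = p i"
  by (auto simp: elem_poly_def coeff_sum p_eq_0)

lemma coeff_dual_poly: "coeff dual_poly s = (if s \<le> l then (-1) ^ s * h_fun p s else 0)"
  by (auto simp: dual_poly_def coeff_sum)

lemma coeff_dual_poly_less: "s < n \<Longrightarrow> coeff dual_poly s = (-1) ^ s * h_fun p s"
  using h_fun_eq_0[of s] by (auto simp: coeff_dual_poly)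

lemma degree_elem_poly_le: "degree elem_poly \<le> k"
  by (rule degree_le) (simp add: coeff_elem_poly p_eq_0)

lemma degree_dual_poly_le: "degree dual_poly \<le> l"
  by (rule degree_le) (simp add: coeff_dual_poly)

lemma coeff_elem_poly_mult_dual_poly_less:
  assumes "N < n"
  shows "coeff (elem_poly * dual_poly) N = (if N = 0 then 1 else 0)"
proof -
  have "coeff (elem_poly * dual_poly) N = (\<Sum>i\<le>N. p i * ((-1) ^ (N - i) * h_fun p (N - i)))"
    using assms by (auto simp: coeff_mult coeff_elem_poly coeff_dual_poly_less intro!: sum.cong)
  then show ?thesis
    using h_fun_convolution[of p N] p_0 by (cases "N = 0") auto
qed

lemma coeff_n_elem_poly_mult_dual_poly: "coeff (elem_poly * dual_poly) n = (-1) ^ l"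
proof -
  let ?conv = "\<Sum>i\<le>n. p i * ((-1) ^ (n - i) * h_fun p (n - i))"
  have "coeff (elem_poly * dual_poly) n = (\<Sum>i<n. p (Suc i) * coeff dual_poly (n - Suc i))"
    using k_pos k_less_n by (simp add: coeff_mult coeff_elem_poly sum.atMost_shift coeff_dual_poly)
  also have "\<dots> = (\<Sum>i<n. p (Suc i) * ((-1) ^ (n - Suc i) * h_fun p (n - Suc i)))"
    by (intro sum.cong) (auto simp: coeff_dual_poly_less)
  also have "\<dots> = ?conv - (-1) ^ n * h_fun p n"
    using p_0 by (simp add: sum.atMost_shift)
  also have "\<dots> = (-1) ^ (n + k)"
    using h_fun_convolution[of p n] p_0 k_less_n by (simp add: h_fun_n power_add)
  also have "\<dots> = (-1) ^ l"
    using k_less_n by (simp add: neg_one_power_add_eq_neg_one_power_diff)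
  finally show ?thesis .
qed

lemma elem_poly_mult_dual_poly: "elem_poly * dual_poly = 1 + monom ((-1) ^ l) n"
proof (rule poly_eqI)
  fix N
  show "coeff (elem_poly * dual_poly) N = coeff (1 + monom ((-1) ^ l) n) N"
  proof (cases N n rule: linorder_cases)
    case less
    then show ?thesis
      by (simp add: coeff_elem_poly_mult_dual_poly_less coeff_monom)
  next
    case equal
    then show ?thesis
      using k_less_n by (simp add: coeff_n_elem_poly_mult_dual_poly)
  next
    case greater
    have "degree (elem_poly * dual_poly) < N"
      using degree_mult_le[of elem_poly dual_poly] degree_elem_poly_le degree_dual_poly_le
        greater k_less_n
      by linarith
    then show ?thesis
      using greater by (simp add: coeff_eq_0)
  qed
qed

lemma p_k_mult_h_fun_l: "p k * h_fun p l = 1"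
proof -
  have "coeff (elem_poly * dual_poly) n = p k * coeff dual_poly (n - k)"
    unfolding coeff_mult coeff_elem_poly using k_less_n
    by (intro sum.mono_neutral_right[of "{..n}" "{k}", simplified]) (auto simp: coeff_dual_poly p_eq_0)
  then have "p k * ((-1) ^ l * h_fun p l) = (-1) ^ l"
    by (simp add: coeff_n_elem_poly_mult_dual_poly coeff_dual_poly)
  then show ?thesis
    by (simp add: mult.left_commute)
qed

lemma p_k_nonzero: "p k \<noteq> 0"
  using p_k_mult_h_fun_l by auto

lemma degree_elem_poly: "degree elem_poly = k"
  using degree_elem_poly_le le_degree[of elem_poly k] p_k_nonzero by (simp add: coeff_elem_poly)

lemma elem_poly_root_norm:
  assumes "poly elem_poly z = 0"
  shows "cmod z = 1"
proof -
  have "1 + (-1) ^ l * z ^ n = 0"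
    using arg_cong[OF elem_poly_mult_dual_poly, of "\<lambda>q. poly q z"] assms
    by (simp add: poly_monom)
  then have "cmod z ^ n = 1"
    by (metis add_eq_0_iff norm_minus_cancel norm_mult norm_one norm_power
        norm_neg_numeral mult_1 power_one)
  then show ?thesis
    using k_less_n by (intro power_eq_imp_eq_base[of _ n 1]) auto
qed

lemma cnj_p:
  assumes "i \<le> k"
  shows "cnj (p i) = p (k - i) / p k"
proof -
  obtain c where c: "reflect_poly elem_poly = smult c (map_poly cnj elem_poly)"
    using reflect_poly_eq_smult_map_poly_cnj[of elem_poly] elem_poly_root_norm p_0
    by (metis coeff_0 coeff_elem_poly zero_neq_one)
  have coeff_reflect: "p (k - j) = c * cnj (p j)" if "j \<le> k" for j
    using arg_cong[OF c, of "\<lambda>q. coeff q j"] that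
    by (simp add: coeff_reflect_poly degree_elem_poly coeff_elem_poly coeff_map_poly)
  then have "c = p k"
    using coeff_reflect[of 0] p_0 by simp
  then show ?thesis
    using coeff_reflect[OF assms] p_k_nonzero by (simp add: field_simps)
qed

lemma cnj_e_int: "cnj (e_int p m) = e_int p (int k - m) / p k"
proof -
  consider "m < 0" | "int k < m" | "0 \<le> m" "m \<le> int k"
    by linarith
  then show ?thesis
  proof cases
    case 3
    then have "nat (int k - m) = k - nat m"
      by linarith
    then show ?thesis
      using 3 cnj_p[of "nat m"] by (simp add: e_int_def)
  qed (auto simp: e_int_def p_eq_0 nat_diff_distrib)
qed

definition ext_poly :: "complex poly" where
  "ext_poly = elem_poly - monom ((-1) ^ l) n * elem_poly"

lemma dual_poly_mult_ext_poly: "dual_poly * ext_poly = 1 - monom 1 (2 * n)"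
proof -
  have "dual_poly * ext_poly = (1 - monom ((-1) ^ l) n) * (elem_poly * dual_poly)"
    by (simp add: ext_poly_def algebra_simps)
  also have "\<dots> = 1 - monom ((-1) ^ l) n * monom ((-1) ^ l) n"
    by (simp add: elem_poly_mult_dual_poly algebra_simps)
  also have "\<dots> = 1 - monom 1 (2 * n)"
    by (simp add: mult_monom power_mult_distrib[symmetric] mult_2)
  finally show ?thesis .
qed

lemma ext_poly_recurrence:
  assumes "1 \<le> P" and "P < 2 * int n"
  shows "(\<Sum>s\<le>l. coeff dual_poly s * coeff_int ext_poly (P - int s)) = 0"
proof -
  have "(\<Sum>s\<le>l. coeff dual_poly s * coeff_int ext_poly (P - int s))
      = coeff (dual_poly * ext_poly) (nat P)"
    using coeff_mult_coeff_int[OF degree_dual_poly_le, of ext_poly "nat P"] assms by simp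
  also have "\<dots> = 0"
    using assms by (simp add: dual_poly_mult_ext_poly coeff_monom nat_eq_iff)
  finally show ?thesis .
qed

lemma coeff_int_ext_poly: "coeff_int ext_poly m = e_int p m - (-1) ^ l * e_int p (m - int n)"
  by (auto simp: coeff_int_def ext_poly_def coeff_monom_mult e_int_def coeff_elem_poly nat_diff_distrib)

lemma coeff_int_ext_poly_less: "m < int n \<Longrightarrow> coeff_int ext_poly m = e_int p m"
  by (simp add: coeff_int_ext_poly e_int_def)

lemma e_int_eq_coeff_int_ext_poly:
  assumes "1 - int l \<le> m"
  shows "e_int p m = - ((-1) ^ l) * coeff_int ext_poly (int n + m)"
proof -
  have "e_int p (int n + m) = 0"
    using assms k_less_n by (auto simp: e_int_def intro!: p_eq_0)
  then show ?thesis
    by (simp add: coeff_int_ext_poly mult.assoc[symmetric] power_mult_distrib[symmetric])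
qed

lemma det_window_ext_poly_shift:
  assumes a: "\<And>i. i < l \<Longrightarrow> 1 - int l \<le> a i \<and> a i \<le> int k"
  shows "det (window_mat l (coeff_int ext_poly) (\<lambda>i. a i + int l))
    = det (window_mat l (e_int p) a) / p k ^ l"
proof -
  have l_int: "int l = int n - int k"
    using k_less_n by simp
  have "det (window_mat l (coeff_int ext_poly) (\<lambda>i. a i + int l))
      = det (window_mat l (coeff_int ext_poly) a) * ((-1) ^ l * coeff dual_poly l) ^ l"
  proof (rule det_window_mat_shift)
    fix i t
    assume "i < l" and "t < l"
    then have "1 \<le> a i + int t + int l" and "a i + int t + int l < 2 * int n"
      using a[of i] k_less_n l_int by linarith+
    then show "(\<Sum>s\<le>l. coeff dual_poly s * coeff_int ext_poly (a i + int t + int l - int s)) = 0"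
      by (rule ext_poly_recurrence)
  next
    show "0 < l"
      using k_less_n by simp
  qed (simp add: coeff_dual_poly)
  also have "window_mat l (coeff_int ext_poly) a = window_mat l (e_int p) a"
  proof -
    have "a i + int j < int n" if "i < l" and "j < l" for i j
      using a[OF that(1)] that(2) k_less_n l_int by linarith
    then show ?thesis
      by (auto simp: window_mat_def coeff_int_ext_poly_less intro!: eq_matI)
  qed
  also have "(-1) ^ l * coeff dual_poly l = h_fun p l"
    by (simp add: coeff_dual_poly mult.assoc[symmetric] power_mult_distrib[symmetric])
  also have "h_fun p l = 1 / p k"
    using p_k_mult_h_fun_l p_k_nonzero by (simp add: nonzero_eq_divide_eq mult.commute)
  finally show ?thesis
    by (simp add: power_one_over)
qed

lemma cnj_schubert_val:
  assumes lam: "lam \<in> young_diagrams k n"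
  shows "cnj (schubert_val k n lam p)
    = det (window_mat l (e_int p) (flip_offset k n lam)) / p k ^ l"
proof -
  interpret cnj: comm_ring_hom cnj
    by standard auto
  let ?A = "mat l l (\<lambda>(i, j). e_int p (int (lam ! i) + int j - int i))"
  let ?W = "window_mat l (e_int p) (flip_offset k n lam)"
  have "map_mat cnj ?A = (1 / p k) \<cdot>\<^sub>m mat l l (\<lambda>(i, j). ?W $$ (l - 1 - i, l - 1 - j))"
  proof (rule eq_matI)
    fix i j
    assume "i < dim_row ((1 / p k) \<cdot>\<^sub>m mat l l (\<lambda>(i, j). ?W $$ (l - 1 - i, l - 1 - j)))"
      and "j < dim_col ((1 / p k) \<cdot>\<^sub>m mat l l (\<lambda>(i, j). ?W $$ (l - 1 - i, l - 1 - j)))"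
    then have i: "i < l" and j: "j < l"
      by auto
    have "?W $$ (l - 1 - i, l - 1 - j)
        = e_int p (flip_offset k n lam (l - 1 - i) + int (l - 1 - j))"
      using i j by (simp add: window_mat_def)
    also have "flip_offset k n lam (l - 1 - i) + int (l - 1 - j)
        = int k - (int (lam ! i) + int j - int i)"
      using i j by (simp add: flip_offset_def of_nat_diff)
    finally show "map_mat cnj ?A $$ (i, j)
        = ((1 / p k) \<cdot>\<^sub>m mat l l (\<lambda>(i, j). ?W $$ (l - 1 - i, l - 1 - j))) $$ (i, j)"
      using i j by (simp add: cnj_e_int)
  qed auto
  then have "cnj (det ?A)
      = (1 / p k) ^ l * det (mat l l (\<lambda>(i, j). ?W $$ (l - 1 - i, l - 1 - j)))"
    by (simp flip: cnj.hom_det)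
  also have "det (mat l l (\<lambda>(i, j). ?W $$ (l - 1 - i, l - 1 - j))) = det ?W"
    by (rule det_reverse_rows_cols) simp
  finally show ?thesis
    by (simp add: schubert_val_def power_one_over)
qed

lemma e_int_bar_diagram_entry:
  assumes lam: "lam \<in> young_diagrams k n" and i: "i < l" and j: "j < l"
  shows "e_int p (int (bar_diagram k n lam ! i) + int j - int i) =
    (if i < durfee lam
     then coeff_int ext_poly (flip_offset k n lam (i + (l - durfee lam)) + int l + int j)
     else - ((-1) ^ l) * coeff_int ext_poly (flip_offset k n lam (i - durfee lam) + int l + int j))"
proof -
  let ?d = "durfee lam" and ?mu = "bar_diagram k n lam"
  have d_le: "?d \<le> l"
    using durfee_le_length[of lam] young_diagram_length[OF lam] by simp
  show ?thesis
  proof (cases "i < ?d")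
    case True
    have "lam ! (?d - 1 - i) \<le> k"
      using young_diagram_nth_le[OF lam, of "?d - 1 - i"] True d_le by simp
    then have "flip_offset k n lam (i + (l - ?d)) + int l + int j = int (?mu ! i) + int j - int i"
      using True d_le nth_bar_diagram[OF i, of lam] by (simp add: flip_offset_def of_nat_diff)
    moreover have "int (?mu ! i) + int j - int i < int n"
      using young_diagram_nth_le[OF bar_diagram_in_young_diagrams[OF lam] i] j k_less_n
        of_nat_diff[of k n] by linarith
    ultimately show ?thesis
      using True by (simp only: if_True coeff_int_ext_poly_less)
  next
    case False
    have "lam ! (l - 1 - i + ?d) \<le> ?d"
      using nth_le_durfee[OF young_diagram_sorted[OF lam]] young_diagram_length[OF lam] False i
      by simp
    then have "flip_offset k n lam (i - ?d) + int l + int j = int n + (int (?mu ! i) + int j - int i)"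
      using False i k_less_n nth_bar_diagram[OF i, of lam]
      by (simp add: flip_offset_def of_nat_diff)
    moreover have "1 - int l \<le> int (?mu ! i) + int j - int i"
      using i by linarith
    ultimately show ?thesis
      using False by (simp only: if_False e_int_eq_coeff_int_ext_poly)
  qed
qed

lemma schubert_val_bar_diagram_eq:
  assumes lam: "lam \<in> young_diagrams k n"
  shows "schubert_val k n (bar_diagram k n lam) p
    = det (window_mat l (e_int p) (flip_offset k n lam)) / p k ^ l"
proof -
  let ?d = "durfee lam"
  let ?V = "window_mat l (coeff_int ext_poly) (\<lambda>i. flip_offset k n lam i + int l)"
  define R where "R = mat l l (\<lambda>(i, j). ?V $$ (if i < ?d then i + (l - ?d) else i - ?d, j))"
  define sgn where "sgn i = (if i < ?d then 1 else - ((-1) ^ l :: complex))" for i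
  have d_le: "?d \<le> l"
    using durfee_le_length[of lam] young_diagram_length[OF lam] by simp
  have "schubert_val k n (bar_diagram k n lam) p = det (mat l l (\<lambda>(i, j). sgn i * R $$ (i, j)))"
    unfolding schubert_val_def using d_le
    by (intro arg_cong[where f = det] eq_matI)
      (auto simp: R_def sgn_def window_mat_def e_int_bar_diagram_entry[OF lam] add.assoc)
  also have "\<dots> = prod sgn {0..<l} * det R"
    by (rule det_scale_rows) (simp add: R_def)
  also have "prod sgn {0..<l} = (- ((-1) ^ l)) ^ (l - ?d)"
  proof -
    have "prod sgn {0..<l} = prod sgn {0..<?d} * prod sgn {?d..<l}"
      using d_le by (simp add: prod.atLeastLessThan_concat)
    then show ?thesis
      by (simp add: sgn_def)
  qed
  also have "det R = (-1) ^ (?d * (l - ?d)) * det ?V"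
  proof -
    have split: "?d + (l - ?d) = l"
      using d_le by simp
    have "?V \<in> carrier_mat (?d + (l - ?d)) (?d + (l - ?d))"
      unfolding split by simp
    from det_swap_rows[OF this] show ?thesis
      unfolding split R_def by (simp add: power_mult_distrib[symmetric])
  qed
  also have "det ?V = det (window_mat l (e_int p) (flip_offset k n lam)) / p k ^ l"
    by (rule det_window_ext_poly_shift) (use flip_offset_bounds[OF lam] in auto)
  ultimately show ?thesis
    using neg_one_power_rotation_sign[OF d_le, where 'a = complex] by simp
qed

lemma schubert_val_bar_diagram:
  "lam \<in> young_diagrams k n
    \<Longrightarrow> schubert_val k n (bar_diagram k n lam) p = cnj (schubert_val k n lam p)"
  by (simp add: schubert_val_bar_diagram_eq cnj_schubert_val)

end

lemma qh_eval_qh_bar: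
  "qh_eval k n (qh_bar k n D) e
    = (\<Sum>lam\<in>young_diagrams k n. of_int (D lam) * schubert_val k n (bar_diagram k n lam) e)"
proof -
  let ?Y = "young_diagrams k n" and ?b = "bar_diagram k n"
  have "qh_eval k n (qh_bar k n D) e
      = (\<Sum>mu\<in>?Y. \<Sum>lam\<in>{lam \<in> ?Y. ?b lam = mu}.
           of_int (D lam) * schubert_val k n (?b lam) e)"
    by (auto simp: qh_eval_def qh_bar_def sum_distrib_right intro!: sum.cong)
  also have "\<dots> = (\<Sum>lam\<in>?Y. of_int (D lam) * schubert_val k n (?b lam) e)"
    using bar_diagram_in_young_diagrams finite_young_diagrams
    by (intro sum.group) auto
  finally show ?thesis .
qed

theorem proposition3:
  fixes k n :: nat and D :: "nat list \<Rightarrow> int" and p :: "nat \<Rightarrow> complex"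
  assumes "0 < k" and "k < n" and "p \<in> qh_spec k n"
  shows "qh_eval k n (qh_bar k n D) p = cnj (qh_eval k n D p)"
proof -
  interpret qh_point k n p
    using assms by unfold_locales
  have "qh_eval k n (qh_bar k n D) p
      = (\<Sum>lam\<in>young_diagrams k n. of_int (D lam) * cnj (schubert_val k n lam p))"
    unfolding qh_eval_qh_bar by (intro sum.cong) (simp_all add: schubert_val_bar_diagram)
  then show ?thesis
    by (simp add: qh_eval_def)
qed

end
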